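(* Let $A\in\mathbb{C}^{n\times n}$ with $ind(A)=k$, fix $A^-\in A\{1\}$ and $A^{GD}\in A\{GD\}$, and let $A^{GD1}=A^{GD}AA^-$. Then: (i) there exist idempotent matrices $M,N\in\mathbb{C}^{n\times n}$ such that $A^kA^{-}M=0$, $MA^k=0$, $NA^kA^{-}=0$, $A^kN=0$; (ii) there exists a matrix $X\in\mathbb{C}^{n\times n}$ such that $$\mathrm{rank}\begin{bmatrix} A & I-M\\ I-N & X\end{bmatrix}=\mathrm{rank}(A).$$ Moreover, these hold with $M=I-AA^{GD1}$, $N=I-A^{GD1}A$, and $X=A^{GD1}$.
   Context: For $A\in\mathbb{C}^{n\times n}$, $ind(A)$ is the smallest nonnegative integer $k$ with $\mathrm{rank}(A^k)=\mathrm{rank}(A^{k+1})$; $A^0=I$. $A\{1\}$ is the set of matrices $X$ with $AXA=A$. $A\{GD\}$ is the set of G-Drazin inverses of $A$: matrices $X$ with $AXA=A$, $XA^{k+1}=A^k$, $A^{k+1}X=A^k$. *)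

theory Defs
  imports "Jordan_Normal_Form.DL_Rank"
begin

definition crank :: "complex mat \<Rightarrow> nat" where
  "crank A = vec_space.rank (dim_row A) A"

definition ind :: "complex mat \<Rightarrow> nat" where
  "ind A = (LEAST k. crank (A ^\<^sub>m k) = crank (A ^\<^sub>m (k + 1)))"

definition inner_inverses :: "nat \<Rightarrow> complex mat \<Rightarrow> complex mat set" where
  "inner_inverses n A = {X \<in> carrier_mat n n. A * X * A = A}"

definition GD_inverses :: "nat \<Rightarrow> complex mat \<Rightarrow> complex mat set" where
  "GD_inverses n A = {X \<in> carrier_mat n n. A * X * A = A
      \<and> X * A ^\<^sub>m (ind A + 1) = A ^\<^sub>m (ind A)
      \<and> A ^\<^sub>m (ind A + 1) * X = A ^\<^sub>m (ind A)}"

end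

theory Submission
  imports Defs
begin

text \<open>
  Write \<open>G\<close> for the G-Drazin inverse and \<open>A\<^sup>-\<close> for the inner inverse. Since \<open>A G\<^sub>1 = A A\<^sup>-\<close> and
  \<open>G\<^sub>1 A = G A\<close>, the matrices \<open>I - M\<close> and \<open>I - N\<close> are the idempotents \<open>A A\<^sup>-\<close> and \<open>G A\<close> of the inner
  inverses \<open>A\<^sup>-\<close> and \<open>G\<close>. The G-Drazin equations exhibit \<open>A\<^sup>k\<close> as a left and as a right multiple
  of \<open>A\<close>, and such multiples are fixed by these idempotents; this gives the four annihilation
  identities. The block matrix factors as
  \<open>[A, A A\<^sup>-; G A, G A A\<^sup>-] = [I; G] A [I, A\<^sup>-]\<close>, so its rank is at most \<open>rank A\<close>, and \<open>A\<close> is one of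
  its blocks.
\<close>

lemma rank_mult_le_right:
  fixes P A :: "'a::field mat"
  assumes P: "P \<in> carrier_mat m n" and A: "A \<in> carrier_mat n p"
  shows "vec_space.rank m (P * A) \<le> vec_space.rank n A"
proof -
  let ?V = "module_vec TYPE('a) n"
  let ?W = "module_vec TYPE('a) m"
  define S where "S = LinearCombinations.module.span class_ring ?V (set (cols A))"
  define T where "T = (\<lambda>v. P *\<^sub>v v)"
  have "set (cols A) \<subseteq> carrier_vec n" using A cols_dim carrier_matD(1) by metis
  then have subS: "subspace class_ring S ?V"
    unfolding S_def using vectorspace.span_is_subspace[OF vec_vs] by (simp add: module_vec_simps)
  have vsS: "vectorspace class_ring (?V\<lparr>carrier := S\<rparr>)"
    using vectorspace.subspace_is_vs[OF vec_vs subS] .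
  have S_carrier: "S \<subseteq> carrier_vec n"
    using subS unfolding subspace_def submodule_def by (auto simp: module_vec_simps)
  have "linear_map class_ring (?V\<lparr>carrier := S\<rparr>) ?W T"
  proof (auto simp add: linear_map_def vsS vec_vs)
    show "mod_hom class_ring (?V\<lparr>carrier := S\<rparr>) ?W T"
    proof (rule mod_hom.intro, unfold mod_hom_axioms_def)
      show "module class_ring (?V\<lparr>carrier := S\<rparr>)" using vsS by (simp add: vectorspace_def)
      show "module class_ring ?W" using vec_module by blast
      show "T \<in> LinearCombinations.module_hom class_ring (?V\<lparr>carrier := S\<rparr>) ?W"
        unfolding LinearCombinations.module_hom_def T_def using S_carrier P
        by (auto simp: module_vec_simps mult_mat_vec intro!: mult_add_distrib_mat_vec)
    qed
  qed
  then interpret L: linear_map class_ring "?V\<lparr>carrier := S\<rparr>" ?W T .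
  have "L.V.fin_dim" unfolding S_def using vec_space.fin_dim_span_cols[OF A] by simp
  note rank_nullity = L.rank_nullity[OF this]
  have "L.imT = T ` S" unfolding mod_hom.im_def[OF L.mod_hom_axioms] by simp
  also have "\<dots> = LinearCombinations.module.span class_ring ?W (set (cols (P * A)))"
    using vec_space.col_space_eq[OF A] vec_space.col_space_eq[of "P * A" m p] P A
    unfolding S_def T_def vec_space.col_space_def by (auto simp: assoc_mult_mat_vec)
  finally show ?thesis
    unfolding vec_space.rank_def using rank_nullity S_def by simp
qed

lemma rank_mult_le_left:
  fixes B C :: "'a::field mat"
  assumes B: "B \<in> carrier_mat m n" and C: "C \<in> carrier_mat n p"
  shows "vec_space.rank m (B * C) \<le> vec_space.rank m B"
proof -
  let ?W = "module_vec TYPE('a) m"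
  define X where "X = LinearCombinations.module.span class_ring ?W (set (cols (B * C)))"
  define Y where "Y = LinearCombinations.module.span class_ring ?W (set (cols B))"
  have BC: "B * C \<in> carrier_mat m p" using B C by auto
  have "set (cols B) \<subseteq> carrier_vec m" using B cols_dim carrier_matD(1) by metis
  then have subY: "subspace class_ring Y ?W"
    unfolding Y_def using vectorspace.span_is_subspace[OF vec_vs] by (simp add: module_vec_simps)
  have "set (cols (B * C)) \<subseteq> carrier_vec m" using BC cols_dim carrier_matD(1) by metis
  then have subX: "subspace class_ring X ?W"
    unfolding X_def using vectorspace.span_is_subspace[OF vec_vs] by (simp add: module_vec_simps)
  have "X \<subseteq> Y"
    using vec_space.col_space_eq[OF B] vec_space.col_space_eq[OF BC] B C
    unfolding X_def Y_def vec_space.col_space_def by (auto simp: assoc_mult_mat_vec)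
  have vsY: "vectorspace class_ring (?W\<lparr>carrier := Y\<rparr>)"
    using vectorspace.subspace_is_vs[OF vec_vs subY] .
  have subXY: "subspace class_ring X (?W\<lparr>carrier := Y\<rparr>)"
    using vectorspace.nested_subspaces[OF vec_vs subY subX \<open>X \<subseteq> Y\<close>] .
  have "vectorspace.fin_dim class_ring (?W\<lparr>carrier := Y\<rparr>)"
    unfolding Y_def using vec_space.fin_dim_span_cols[OF B] by simp
  moreover have "vectorspace.fin_dim class_ring (?W\<lparr>carrier := X\<rparr>)"
    unfolding X_def using vec_space.fin_dim_span_cols[OF BC] by simp
  ultimately show ?thesis
    using vectorspace.subspace_dim[OF vsY subXY] unfolding vec_space.rank_def X_def Y_def by simp
qed

lemma rank_mult_le_middle:
  fixes L A R :: "'a::field mat"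
  assumes L: "L \<in> carrier_mat k m" and A: "A \<in> carrier_mat m n" and R: "R \<in> carrier_mat n q"
  shows "vec_space.rank k (L * A * R) \<le> vec_space.rank m A"
proof -
  have "vec_space.rank k (L * A * R) \<le> vec_space.rank k (L * A)"
    using L A by (intro rank_mult_le_left[OF _ R]) simp
  also have "\<dots> \<le> vec_space.rank m A"
    by (rule rank_mult_le_right[OF L A])
  finally show ?thesis .
qed

lemma rank_four_block_mat_factored:
  fixes A X Y :: "'a::field mat"
  assumes A: "A \<in> carrier_mat m n" and X: "X \<in> carrier_mat p m" and Y: "Y \<in> carrier_mat n q"
  shows "vec_space.rank (m + p) (four_block_mat A (A * Y) (X * A) (X * A * Y)) = vec_space.rank m A"
proof -
  define K where "K = four_block_mat A (A * Y) (X * A) (X * A * Y)"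
  have K: "K \<in> carrier_mat (m + p) (n + q)" unfolding K_def using A X Y by simp
  define A' where "A' = four_block_mat A (0\<^sub>m m 0) (0\<^sub>m 0 n) (0\<^sub>m 0 0)"
  have A'_eq: "A' = A" unfolding A'_def using A by (intro eq_matI) auto
  define L where "L = four_block_mat (1\<^sub>m m) (0\<^sub>m m 0) X (0\<^sub>m p 0)"
  define R where "R = four_block_mat (1\<^sub>m n) Y (0\<^sub>m 0 n) (0\<^sub>m 0 q)"
  have L: "L \<in> carrier_mat (m + p) m" unfolding L_def using X by (intro carrier_matI) auto
  have R: "R \<in> carrier_mat n (n + q)" unfolding R_def using Y by (intro carrier_matI) auto
  have LA': "L * A' = four_block_mat A (0\<^sub>m m 0) (X * A) (0\<^sub>m p 0)"
    unfolding L_def A'_def using A X by (subst mult_four_block_mat[of _ m m _ 0 _ p]) auto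
  have factor: "L * A' * R = K"
    unfolding LA' R_def K_def using A X Y by (subst mult_four_block_mat[of _ m n _ 0 _ p]) auto
  define S where "S = four_block_mat (1\<^sub>m m :: 'a mat) (0\<^sub>m m p) (0\<^sub>m 0 m) (0\<^sub>m 0 p)"
  define T where "T = four_block_mat (1\<^sub>m n :: 'a mat) (0\<^sub>m n 0) (0\<^sub>m q n) (0\<^sub>m q 0)"
  have S: "S \<in> carrier_mat m (m + p)" unfolding S_def by (intro carrier_matI) auto
  have T: "T \<in> carrier_mat (n + q) n" unfolding T_def by (intro carrier_matI) auto
  have SK: "S * K = four_block_mat A (A * Y) (0\<^sub>m 0 n) (0\<^sub>m 0 q)"
    unfolding S_def K_def using A X Y by (subst mult_four_block_mat[of _ m m _ p _ 0]) auto
  have select: "S * K * T = A"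
    unfolding SK T_def using A Y
    by (subst mult_four_block_mat[of _ m n _ q _ 0]) (auto intro!: eq_matI)
  have "vec_space.rank (m + p) K \<le> vec_space.rank m A"
    using rank_mult_le_middle[OF L A R] factor A'_eq by simp
  moreover have "vec_space.rank m A \<le> vec_space.rank (m + p) K"
    using rank_mult_le_middle[OF S K T] select by simp
  ultimately show ?thesis unfolding K_def by simp
qed

lemma pow_mat_Suc_left:
  fixes A :: "'a::semiring_1 mat"
  assumes A: "A \<in> carrier_mat n n"
  shows "A ^\<^sub>m Suc k = A * A ^\<^sub>m k"
proof (induction k)
  case 0
  then show ?case using A by simp
next
  case (Suc k)
  have "A ^\<^sub>m Suc (Suc k) = (A * A ^\<^sub>m k) * A" using Suc by simp
  also have "\<dots> = A * A ^\<^sub>m Suc k" using A by (simp add: assoc_mult_mat[of A n n _ n A n])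
  finally show ?case .
qed

lemma inner_inverse_idempotent:
  fixes A X :: "'a::semiring_1 mat"
  assumes A: "A \<in> carrier_mat m n" and X: "X \<in> carrier_mat n m" and AXA: "A * X * A = A"
  shows "(A * X) * (A * X) = A * X" and "(X * A) * (X * A) = X * A"
proof -
  have "(A * X) * (A * X) = (A * X * A) * X"
    using assoc_mult_mat[OF mult_carrier_mat[OF A X] A X] by simp
  then show "(A * X) * (A * X) = A * X" using AXA by simp
  have "(X * A) * (X * A) = X * (A * X * A)"
    using assoc_mult_mat[OF X A mult_carrier_mat[OF X A]] assoc_mult_mat[OF A X A] by simp
  then show "(X * A) * (X * A) = X * A" using AXA by simp
qed

lemma inner_inverse_fixes_right_multiple:
  fixes A X B C :: "'a::semiring_1 mat"
  assumes A: "A \<in> carrier_mat m n" and X: "X \<in> carrier_mat n m" and C: "C \<in> carrier_mat p m"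
    and AXA: "A * X * A = A" and B: "B = C * A"
  shows "B * X * A = B"
proof -
  have "C * A * X * A = C * (A * X * A)"
    using assoc_mult_mat[OF C A X] assoc_mult_mat[OF C mult_carrier_mat[OF A X] A] by simp
  then show ?thesis using AXA B by simp
qed

lemma inner_inverse_fixes_left_multiple:
  fixes A X B C :: "'a::semiring_1 mat"
  assumes A: "A \<in> carrier_mat m n" and X: "X \<in> carrier_mat n m" and C: "C \<in> carrier_mat n p"
    and AXA: "A * X * A = A" and B: "B = A * C"
  shows "A * X * B = B"
proof -
  have "A * X * (A * C) = (A * X * A) * C"
    using assoc_mult_mat[OF mult_carrier_mat[OF A X] A C] by simp
  then show ?thesis using AXA B by simp
qed

lemma inner_inverses_product:
  fixes A X Y :: "'a::semiring_1 mat"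
  assumes A: "A \<in> carrier_mat m n" and X: "X \<in> carrier_mat n m" and Y: "Y \<in> carrier_mat n m"
    and AXA: "A * X * A = A" and AYA: "A * Y * A = A"
  shows "A * (X * A * Y) = A * Y" and "X * A * Y * A = X * A"
proof -
  have "A * (X * A * Y) = A * X * A * Y"
    using assoc_mult_mat[OF A mult_carrier_mat[OF X A] Y] assoc_mult_mat[OF A X A] by simp
  then show "A * (X * A * Y) = A * Y" using AXA by simp
  have "X * A * Y * A = X * (A * Y * A)"
    using assoc_mult_mat[OF mult_carrier_mat[OF X A] Y A] assoc_mult_mat[OF X A Y]
      assoc_mult_mat[OF X mult_carrier_mat[OF A Y] A] by simp
  then show "X * A * Y * A = X * A" using AYA by simp
qed

lemma GD_power_factors:
  fixes A G :: "'a::semiring_1 mat"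
  assumes A: "A \<in> carrier_mat n n" and G: "G \<in> carrier_mat n n"
    and left: "G * A ^\<^sub>m (k + 1) = A ^\<^sub>m k" and right: "A ^\<^sub>m (k + 1) * G = A ^\<^sub>m k"
  shows "A ^\<^sub>m k = (G * A ^\<^sub>m k) * A" and "A ^\<^sub>m k = A * (A ^\<^sub>m k * G)"
proof -
  have Ak: "A ^\<^sub>m k \<in> carrier_mat n n" using A by simp
  show "A ^\<^sub>m k = (G * A ^\<^sub>m k) * A"
    using left assoc_mult_mat[OF G Ak A] by simp
  have "A ^\<^sub>m k = (A * A ^\<^sub>m k) * G" using right pow_mat_Suc_left[OF A, of k] by simp
  then show "A ^\<^sub>m k = A * (A ^\<^sub>m k * G)" using assoc_mult_mat[OF A Ak G] by simp
qed

lemma mult_one_minus_right_eq_zero: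
  fixes B P :: "'a::ring_1 mat"
  assumes B: "B \<in> carrier_mat m n" and P: "P \<in> carrier_mat n n" and "B * P = B"
  shows "B * (1\<^sub>m n - P) = 0\<^sub>m m n"
  using assms by (simp add: mult_minus_distrib_mat[OF B one_carrier_mat P] minus_r_inv_mat)

lemma mult_one_minus_left_eq_zero:
  fixes B P :: "'a::ring_1 mat"
  assumes B: "B \<in> carrier_mat n m" and P: "P \<in> carrier_mat n n" and "P * B = B"
  shows "(1\<^sub>m n - P) * B = 0\<^sub>m n m"
  using assms by (simp add: minus_mult_distrib_mat[OF one_carrier_mat P B] minus_r_inv_mat)

lemma idempotent_one_minus_mat:
  fixes P :: "'a::ring_1 mat"
  assumes P: "P \<in> carrier_mat n n" and "P * P = P"
  shows "(1\<^sub>m n - P) * (1\<^sub>m n - P) = 1\<^sub>m n - P"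
proof -
  have "(1\<^sub>m n - P) * P = 0\<^sub>m n n" using mult_one_minus_left_eq_zero[OF P P] assms by simp
  then have "(1\<^sub>m n - P) * (1\<^sub>m n - P) = (1\<^sub>m n - P) - 0\<^sub>m n n"
    using P by (simp add: mult_minus_distrib_mat[OF minus_carrier_mat[OF P] one_carrier_mat P])
  also have "\<dots> = 1\<^sub>m n - P" using P by (intro eq_matI) auto
  finally show ?thesis .
qed

lemma one_minus_one_minus_mat:
  fixes P :: "'a::ring_1 mat"
  assumes "P \<in> carrier_mat n n"
  shows "1\<^sub>m n - (1\<^sub>m n - P) = P"
  using assms by (intro eq_matI) auto

lemma GD_power_annihilated:
  fixes A Am G :: "'a::ring_1 mat"
  assumes A: "A \<in> carrier_mat n n" and Am: "Am \<in> carrier_mat n n" and G: "G \<in> carrier_mat n n"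
    and AAmA: "A * Am * A = A" and AGA: "A * G * A = A"
    and left: "G * A ^\<^sub>m (k + 1) = A ^\<^sub>m k" and right: "A ^\<^sub>m (k + 1) * G = A ^\<^sub>m k"
  shows "A ^\<^sub>m k * Am * (1\<^sub>m n - A * Am) = 0\<^sub>m n n"
    and "(1\<^sub>m n - A * Am) * A ^\<^sub>m k = 0\<^sub>m n n"
    and "(1\<^sub>m n - G * A) * A ^\<^sub>m k * Am = 0\<^sub>m n n"
    and "A ^\<^sub>m k * (1\<^sub>m n - G * A) = 0\<^sub>m n n"
proof -
  have Ak: "A ^\<^sub>m k \<in> carrier_mat n n" using A by simp
  have GAk: "G * A ^\<^sub>m k \<in> carrier_mat n n" and AkG: "A ^\<^sub>m k * G \<in> carrier_mat n n"
    using Ak G by auto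
  note factors = GD_power_factors[OF A G left right]
  have "A ^\<^sub>m k * Am * A = A ^\<^sub>m k"
    by (rule inner_inverse_fixes_right_multiple[OF A Am GAk AAmA factors(1)])
  then have "A ^\<^sub>m k * Am * (A * Am) = A ^\<^sub>m k * Am"
    using assoc_mult_mat[OF mult_carrier_mat[OF Ak Am] A Am] by simp
  then show "A ^\<^sub>m k * Am * (1\<^sub>m n - A * Am) = 0\<^sub>m n n"
    using mult_one_minus_right_eq_zero[OF _ mult_carrier_mat[OF A Am]] Ak Am by simp
  have "A * Am * A ^\<^sub>m k = A ^\<^sub>m k"
    by (rule inner_inverse_fixes_left_multiple[OF A Am AkG AAmA factors(2)])
  then show "(1\<^sub>m n - A * Am) * A ^\<^sub>m k = 0\<^sub>m n n"
    using mult_one_minus_left_eq_zero[OF Ak mult_carrier_mat[OF A Am]] by simp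
  have "G * A * A ^\<^sub>m k = A ^\<^sub>m k"
    using left pow_mat_Suc_left[OF A, of k] assoc_mult_mat[OF G A Ak] by simp
  then have "(1\<^sub>m n - G * A) * A ^\<^sub>m k = 0\<^sub>m n n"
    using mult_one_minus_left_eq_zero[OF Ak mult_carrier_mat[OF G A]] by simp
  then show "(1\<^sub>m n - G * A) * A ^\<^sub>m k * Am = 0\<^sub>m n n"
    using Am by simp
  have "A ^\<^sub>m k * G * A = A ^\<^sub>m k"
    by (rule inner_inverse_fixes_right_multiple[OF A G GAk AGA factors(1)])
  then have "A ^\<^sub>m k * (G * A) = A ^\<^sub>m k"
    using assoc_mult_mat[OF Ak G A] by simp
  then show "A ^\<^sub>m k * (1\<^sub>m n - G * A) = 0\<^sub>m n n"
    using mult_one_minus_right_eq_zero[OF Ak mult_carrier_mat[OF G A]] by simp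
qed

theorem theorem2p9:
  fixes A Am AGD :: "complex mat" and n k :: nat
  assumes "A \<in> carrier_mat n n"
    and "ind A = k"
    and "Am \<in> inner_inverses n A"
    and "AGD \<in> GD_inverses n A"
  shows "(\<exists>M \<in> carrier_mat n n. \<exists>N \<in> carrier_mat n n.
            M * M = M \<and> N * N = N
          \<and> A ^\<^sub>m k * Am * M = 0\<^sub>m n n \<and> M * A ^\<^sub>m k = 0\<^sub>m n n
          \<and> N * A ^\<^sub>m k * Am = 0\<^sub>m n n \<and> A ^\<^sub>m k * N = 0\<^sub>m n n
          \<and> (\<exists>X \<in> carrier_mat n n.
               crank (four_block_mat A (1\<^sub>m n - M) (1\<^sub>m n - N) X) = crank A))
       \<and> (let G1 = AGD * A * Am; M = 1\<^sub>m n - A * G1; N = 1\<^sub>m n - G1 * A in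
            M * M = M \<and> N * N = N
          \<and> A ^\<^sub>m k * Am * M = 0\<^sub>m n n \<and> M * A ^\<^sub>m k = 0\<^sub>m n n
          \<and> N * A ^\<^sub>m k * Am = 0\<^sub>m n n \<and> A ^\<^sub>m k * N = 0\<^sub>m n n
          \<and> crank (four_block_mat A (1\<^sub>m n - M) (1\<^sub>m n - N) G1) = crank A)"
proof -
  note A = assms(1)
  from assms(3) have Am: "Am \<in> carrier_mat n n" and AAmA: "A * Am * A = A"
    unfolding inner_inverses_def by auto
  from assms(4) have G: "AGD \<in> carrier_mat n n" and AGA: "A * AGD * A = A"
    and left: "AGD * A ^\<^sub>m (k + 1) = A ^\<^sub>m k" and right: "A ^\<^sub>m (k + 1) * AGD = A ^\<^sub>m k"
    unfolding GD_inverses_def assms(2) by auto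
  define G1 where "G1 = AGD * A * Am"
  have G1: "G1 \<in> carrier_mat n n" unfolding G1_def using A Am G by simp
  have P: "A * Am \<in> carrier_mat n n" and Q: "AGD * A \<in> carrier_mat n n" using A Am G by auto
  note idempotent = inner_inverse_idempotent[OF A Am AAmA] inner_inverse_idempotent[OF A G AGA]
  have "crank (four_block_mat A (A * Am) (AGD * A) G1) = crank A"
    using rank_four_block_mat_factored[OF A G Am] A G unfolding crank_def G1_def by simp
  then have "let M = 1\<^sub>m n - A * G1; N = 1\<^sub>m n - G1 * A in
      M * M = M \<and> N * N = N
    \<and> A ^\<^sub>m k * Am * M = 0\<^sub>m n n \<and> M * A ^\<^sub>m k = 0\<^sub>m n n
    \<and> N * A ^\<^sub>m k * Am = 0\<^sub>m n n \<and> A ^\<^sub>m k * N = 0\<^sub>m n n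
    \<and> crank (four_block_mat A (1\<^sub>m n - M) (1\<^sub>m n - N) G1) = crank A"
    unfolding Let_def G1_def inner_inverses_product[OF A G Am AGA AAmA]
      one_minus_one_minus_mat[OF P] one_minus_one_minus_mat[OF Q]
    using GD_power_annihilated[OF A Am G AAmA AGA left right]
      idempotent_one_minus_mat[OF P idempotent(1)] idempotent_one_minus_mat[OF Q idempotent(4)]
    by simp
  then show ?thesis
    using G1 minus_carrier_mat[OF P] minus_carrier_mat[OF Q]
    unfolding Let_def G1_def[symmetric] inner_inverses_product[OF A G Am AGA AAmA, folded G1_def]
    by blast
qed

end
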